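(* Let $X$ be an exponential vector space over a field $K$. If $Q(X)\neq\emptyset$, then $Q(X)$ contains a maximal orderly independent set, i.e. an orderly independent subset $B\subseteq Q(X)$ such that no orderly independent subset of $Q(X)$ properly contains $B$.
   Context: An exponential vector space (evs) over a field $K$ is a partially ordered set $(X,\leq)$ with a binary operation $+$ on $X$ and a map $K\times X\to X$, $(\alpha,x)\mapsto \alpha x$, such that: (A1) $(X,+)$ is a commutative semigroup with identity $\theta$; (A2) $x\leq y$ implies $x+z\leq y+z$ and $\alpha x\leq \alpha y$ for all $z\in X$, $\alpha\in K$; (A3) $\alpha(x+y)=\alpha x+\alpha y$, $\alpha(\beta x)=(\alpha\beta)x$, $(\alpha+\beta)x\leq \alpha x+\beta x$, $1x=x$; (A4) $\alpha x=\theta$ iff $\alpha=0$ or $x=\theta$; (A5) $x+(-1)x=\theta$ iff $x\in X_0$, where $X_0:=\{z\in X: y\not\leq z \text{ for all } y\in X\smallsetminus\{z\}\}$ (the set of minimal elements, called the primitive space; it is a vector space over $K$); (A6) for each $x\in X$ there is $p\in X_0$ with $p\leq x$. For $x\in X\smallsetminus X_0$ let $L(x):=\{z\in X: z\geq \alpha x+p \text{ for some } \alpha\in K\smallsetminus\{0\},\ p\in X_0\}$. Elements $x,y\in X\smallsetminus X_0$ are orderly dependent if $x\in L(y)$ or $y\in L(x)$, and orderly independent otherwise; a subset $B\subseteq X\smallsetminus X_0$ is orderly independent if any two distinct members of $B$ are orderly independent. For $x\in X$ write $\downarrow x:=\{z\in X: z\leq x\}$. The feasible set is $Q(X):=\{x\in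 X\smallsetminus X_0: (\downarrow x\smallsetminus X_0)\subseteq L(x)\}$. *)

theory Defs
  imports Main
begin

text \<open>An exponential vector space over a field 'k: the carrier is the whole type 'x,
  with partial order le, addition add with identity th, and scalar multiplication sm.\<close>

definition prim :: "('x \<Rightarrow> 'x \<Rightarrow> bool) \<Rightarrow> 'x set" where
  "prim le = {z. \<forall>y. y \<noteq> z \<longrightarrow> \<not> le y z}"

definition evs :: "('x \<Rightarrow> 'x \<Rightarrow> bool) \<Rightarrow> ('x \<Rightarrow> 'x \<Rightarrow> 'x) \<Rightarrow> ('k::field \<Rightarrow> 'x \<Rightarrow> 'x) \<Rightarrow> 'x \<Rightarrow> bool" where
  "evs le add sm th \<longleftrightarrow>
     (\<forall>x. le x x) \<and> (\<forall>x y. le x y \<and> le y x \<longrightarrow> x = y) \<and>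
     (\<forall>x y z. le x y \<and> le y z \<longrightarrow> le x z) \<and>
     \<comment> \<open>A1\<close>
     (\<forall>x y z. add (add x y) z = add x (add y z)) \<and> (\<forall>x y. add x y = add y x) \<and>
     (\<forall>x. add th x = x) \<and>
     \<comment> \<open>A2\<close>
     (\<forall>x y z a. le x y \<longrightarrow> le (add x z) (add y z) \<and> le (sm a x) (sm a y)) \<and>
     \<comment> \<open>A3\<close>
     (\<forall>a x y. sm a (add x y) = add (sm a x) (sm a y)) \<and>
     (\<forall>a b x. sm a (sm b x) = sm (a * b) x) \<and>
     (\<forall>a b x. le (sm (a + b) x) (add (sm a x) (sm b x))) \<and>
     (\<forall>x. sm 1 x = x) \<and>
     \<comment> \<open>A4\<close>
     (\<forall>a x. sm a x = th \<longleftrightarrow> a = 0 \<or> x = th) \<and>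
     \<comment> \<open>A5\<close>
     (\<forall>x. add x (sm (-1) x) = th \<longleftrightarrow> x \<in> prim le) \<and>
     \<comment> \<open>A6\<close>
     (\<forall>x. \<exists>p \<in> prim le. le p x)"

definition Lset :: "('x \<Rightarrow> 'x \<Rightarrow> bool) \<Rightarrow> ('x \<Rightarrow> 'x \<Rightarrow> 'x) \<Rightarrow> ('k::field \<Rightarrow> 'x \<Rightarrow> 'x) \<Rightarrow> 'x \<Rightarrow> 'x set" where
  "Lset le add sm x = {z. \<exists>a p. a \<noteq> 0 \<and> p \<in> prim le \<and> le (add (sm a x) p) z}"

definition orderly_dependent :: "('x \<Rightarrow> 'x \<Rightarrow> bool) \<Rightarrow> ('x \<Rightarrow> 'x \<Rightarrow> 'x) \<Rightarrow> ('k::field \<Rightarrow> 'x \<Rightarrow> 'x) \<Rightarrow> 'x \<Rightarrow> 'x \<Rightarrow> bool" where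
  "orderly_dependent le add sm x y \<longleftrightarrow> x \<in> Lset le add sm y \<or> y \<in> Lset le add sm x"

definition orderly_independent_set :: "('x \<Rightarrow> 'x \<Rightarrow> bool) \<Rightarrow> ('x \<Rightarrow> 'x \<Rightarrow> 'x) \<Rightarrow> ('k::field \<Rightarrow> 'x \<Rightarrow> 'x) \<Rightarrow> 'x set \<Rightarrow> bool" where
  "orderly_independent_set le add sm B \<longleftrightarrow>
     B \<subseteq> - prim le \<and> (\<forall>x\<in>B. \<forall>y\<in>B. x \<noteq> y \<longrightarrow> \<not> orderly_dependent le add sm x y)"

definition feasible :: "('x \<Rightarrow> 'x \<Rightarrow> bool) \<Rightarrow> ('x \<Rightarrow> 'x \<Rightarrow> 'x) \<Rightarrow> ('k::field \<Rightarrow> 'x \<Rightarrow> 'x) \<Rightarrow> 'x set" where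
  "feasible le add sm = {x. x \<notin> prim le \<and> ({z. le z x} - prim le) \<subseteq> Lset le add sm x}"

end

theory Submission
  imports Defs
begin

text \<open>Orderly independence is a pairwise condition, so it survives unions of chains and
  Zorn's lemma yields a maximal orderly independent subset of \<open>Q(X)\<close>.\<close>

lemma exists_maximal_pairwise_subset:
  "\<exists>B\<subseteq>S. pairwise R B \<and> (\<forall>C\<subseteq>S. pairwise R C \<and> B \<subseteq> C \<longrightarrow> C = B)"
proof -
  let ?A = "{B. B \<subseteq> S \<and> pairwise R B}"
  have "\<Union>\<C> \<in> ?A" if "\<C> \<in> chains ?A" for \<C>
  proof -
    have "\<C> \<subseteq> ?A" and "chain\<^sub>\<subseteq> \<C>"
      using that unfolding chains_def by auto
    then show ?thesis
      using pairwise_chain_Union[of \<C> R] by blast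
  qed
  then obtain M where "M \<in> ?A" "\<forall>X\<in>?A. M \<subseteq> X \<longrightarrow> X = M"
    using Zorn_Lemma[of ?A] by blast
  then show ?thesis by blast
qed

lemma orderly_independent_set_iff_pairwise:
  "orderly_independent_set le add sm B \<longleftrightarrow>
     B \<subseteq> - prim le \<and> pairwise (\<lambda>x y. \<not> orderly_dependent le add sm x y) B"
  unfolding orderly_independent_set_def pairwise_def by blast

lemma feasible_subset_Compl_prim: "feasible le add sm \<subseteq> - prim le"
  unfolding feasible_def by blast

theorem mainTheorem6:
  fixes le :: "'x \<Rightarrow> 'x \<Rightarrow> bool" and add :: "'x \<Rightarrow> 'x \<Rightarrow> 'x"
    and sm :: "'k::field \<Rightarrow> 'x \<Rightarrow> 'x" and th :: 'x
  assumes "evs le add sm th"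
    and "feasible le add sm \<noteq> {}"
  shows "\<exists>B. B \<subseteq> feasible le add sm \<and> orderly_independent_set le add sm B \<and>
           (\<forall>C. C \<subseteq> feasible le add sm \<and> orderly_independent_set le add sm C \<and> B \<subseteq> C \<longrightarrow> C = B)"
proof -
  let ?Q = "feasible le add sm" and ?R = "\<lambda>x y. \<not> orderly_dependent le add sm x y"
  have independent_iff: "orderly_independent_set le add sm C \<longleftrightarrow> pairwise ?R C"
    if "C \<subseteq> ?Q" for C
    using that feasible_subset_Compl_prim[of le add sm]
    unfolding orderly_independent_set_iff_pairwise by blast
  obtain B where B: "B \<subseteq> ?Q" "pairwise ?R B"
      and maximal: "\<And>C. C \<subseteq> ?Q \<Longrightarrow> pairwise ?R C \<Longrightarrow> B \<subseteq> C \<Longrightarrow> C = B"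
    using exists_maximal_pairwise_subset[of ?Q ?R] by auto
  show ?thesis
  proof (intro exI conjI allI impI)
    show "B \<subseteq> ?Q" and "orderly_independent_set le add sm B"
      using B independent_iff by simp_all
    show "C = B" if "C \<subseteq> ?Q \<and> orderly_independent_set le add sm C \<and> B \<subseteq> C" for C
      using that maximal independent_iff by metis
  qed
qed

end
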